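(* Let $C(z)\in 1+z^2\mathbb Z[z^2]$ and suppose $C(z)=\phi(z)\phi(-z)$ for some polynomial $\phi(z)\in\mathbb Z[z]$. Then $C(z)\,C(iz)\,C(z^2)$ is the square of a formal power series with integer coefficients. Consequently, for every strongly amphicheiral knot $K$ with Conway polynomial $C(z)$, there is $F\in\mathbb Z_4[z^2]$ with $F^2=C(z)\,C(z^2)\,C(iz)$ in $\mathbb Z_4[z^2]$.
   Context: A knot $K\subset S^3$ is strongly (positive or negative) amphicheiral if there is an orientation-reversing involution of $S^3$ mapping $K$ to itself setwise (whose restriction to $K$ preserves, respectively reverses, the string orientation). The Conway polynomial $C(z)$ of a knot lies in $1+z^2\mathbb Z[z^2]$, and $C(z)C(z^2)C(iz)\in\mathbb Z[z^2]$ is reduced modulo $4$. *)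

theory Defs
  imports Complex_Main "HOL-Computational_Algebra.Computational_Algebra"
begin

definition conway_triple :: "int poly \<Rightarrow> complex poly" where
  "conway_triple C =
     map_poly of_int C
     * pcompose (map_poly of_int C) [:0, \<i>:]
     * pcompose (map_poly of_int C) [:0, 0, 1:]"

end

theory Submission
  imports Defs
begin

text \<open>
  Write \<open>C(z) = P(z\<^sup>2)\<close>. Modulo 2 we have \<open>\<phi>(-z) \<equiv> \<phi>(z)\<close> and
  \<open>\<phi>(z)\<^sup>2 \<equiv> \<phi>(z\<^sup>2)\<close>, so \<open>P(z\<^sup>2) = \<phi>(z)\<phi>(-z) \<equiv> \<phi>(z\<^sup>2)\<close> and hence
  \<open>P = \<phi> + 2h\<close>. Expanding \<open>P(z)P(-z)\<close> with this shows \<open>P(z)P(-z) \<equiv> P(z\<^sup>2)\<close> modulo 4,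
  and substituting \<open>z\<^sup>2\<close> gives \<open>C(z)C(iz) = P(z\<^sup>2)P(-z\<^sup>2) \<equiv> C(z\<^sup>2)\<close> modulo 4.
  Thus the triple product is \<open>X\<^sup>2 + 4Y\<close> with \<open>X = C(z\<^sup>2)\<close>, \<open>X(0) = 1\<close>, \<open>Y(0) = 0\<close>;
  such a series is the square \<open>(X + 2t)\<^sup>2\<close>, where \<open>Xt + t\<^sup>2 = Y\<close> is solved coefficient
  by coefficient over the integers. The same \<open>X\<close> serves as \<open>F\<close> for the statement modulo 4.
\<close>

lemma coeff_pcompose_x_squared:
  "coeff (pcompose p [:0, 0, 1:]) n = (if even n then coeff p (n div 2) else 0)"
  for p :: "'a::comm_semiring_1 poly"
  by (induction p arbitrary: n) (auto simp: pcompose_pCons coeff_pCons split: nat.splits)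

lemma even_poly_obtain_pcompose_x_squared:
  fixes p :: "'a::comm_semiring_1 poly"
  assumes "\<forall>n. odd n \<longrightarrow> coeff p n = 0"
  obtains q where "p = pcompose q [:0, 0, 1:]"
proof
  define q where "q = Abs_poly (\<lambda>n. coeff p (2 * n))"
  have "coeff q = (\<lambda>n. coeff p (2 * n))"
    unfolding q_def by (rule coeff_Abs_poly[of "degree p"]) (simp add: coeff_eq_0)
  then show "p = pcompose q [:0, 0, 1:]"
    using assms by (intro poly_eqI) (auto simp: coeff_pcompose_x_squared)
qed

lemma pcompose_numeral [simp]: "pcompose (numeral n) q = numeral n"
  for q :: "'a::comm_semiring_1 poly"
  by (simp add: numeral_poly)

lemma pcompose_dvd_pcompose: "p dvd q \<Longrightarrow> pcompose p r dvd pcompose q r"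
  for p q r :: "'a::comm_semiring_1 poly"
  by (metis dvd_def pcompose_mult)

lemma const_poly_dvd_pcompose_x_squared_iff:
  "[:c:] dvd pcompose p [:0, 0, 1:] \<longleftrightarrow> [:c:] dvd p"
  for p :: "'a::idom poly"
proof
  assume "[:c:] dvd pcompose p [:0, 0, 1:]"
  then have "c dvd coeff (pcompose p [:0, 0, 1:]) (2 * n)" for n
    by (simp add: const_poly_dvd_iff)
  then show "[:c:] dvd p"
    by (simp add: const_poly_dvd_iff coeff_pcompose_x_squared)
qed (metis pcompose_dvd_pcompose pcompose_const)

lemma square_cong_pcompose_x_squared_mod_2:
  "2 dvd f * f - pcompose f [:0, 0, 1:]" for f :: "int poly"
proof (induction f)
  case (pCons a f)
  have "2 dvd [:a:] * [:a:] - [:a:]"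
    by (simp add: numeral_poly const_poly_dvd_iff coeff_pCons split: nat.split)
  moreover have "(A + X * f) * (A + X * f) - (A + X * X * g)
      = (A * A - A) + 2 * (A * X * f) + X * X * (f * f - g)" for A X g :: "int poly"
    by (simp add: algebra_simps)
  moreover have "pCons a f = [:a:] + [:0, 1:] * f"
    by simp
  moreover have "pcompose (pCons a f) [:0, 0, 1:]
                 = [:a:] + [:0, 1:] * [:0, 1:] * pcompose f [:0, 0, 1:]"
    by (simp add: pcompose_pCons)
  ultimately show ?case
    using pCons.IH by (metis dvd_add dvd_mult dvd_triv_left)
qed simp

lemma pcompose_neg_cong_mod_2: "2 dvd pcompose f [:0, -1:] - f" for f :: "int poly"
  by (auto simp: numeral_poly const_poly_dvd_iff coeff_pcompose_linear algebra_simps)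

lemma mult_pcompose_neg_add_cong_mod_2:
  "2 dvd g * pcompose h [:0, -1:] + h * pcompose g [:0, -1:]" for g h :: "int poly"
proof -
  have "g * pcompose h [:0, -1:] + h * pcompose g [:0, -1:]
        = g * (pcompose h [:0, -1:] - h) + h * (pcompose g [:0, -1:] - g) + 2 * (g * h)"
    by (simp add: algebra_simps)
  then show ?thesis
    by (metis dvd_add dvd_mult dvd_triv_left pcompose_neg_cong_mod_2)
qed

lemma pcompose_x_squared_cong_mod_4:
  fixes P \<phi> :: "int poly"
  assumes fac: "pcompose P [:0, 0, 1:] = \<phi> * pcompose \<phi> [:0, -1:]"
  shows "4 dvd P * pcompose P [:0, -1:] - pcompose P [:0, 0, 1:]"
proof -
  have "pcompose (P - \<phi>) [:0, 0, 1:]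
        = \<phi> * (pcompose \<phi> [:0, -1:] - \<phi>) + (\<phi> * \<phi> - pcompose \<phi> [:0, 0, 1:])"
    using fac by (simp add: pcompose_diff algebra_simps)
  then have "2 dvd pcompose (P - \<phi>) [:0, 0, 1:]"
    by (metis dvd_add dvd_mult pcompose_neg_cong_mod_2 square_cong_pcompose_x_squared_mod_2)
  then have "2 dvd P - \<phi>"
    using const_poly_dvd_pcompose_x_squared_iff[of 2 "P - \<phi>"] by (simp add: numeral_poly)
  then obtain h where "P - \<phi> = 2 * h" ..
  then have P: "P = \<phi> + 2 * h"
    by (simp add: algebra_simps)
  have "P * pcompose P [:0, -1:] - pcompose P [:0, 0, 1:]
        = 2 * (h * pcompose \<phi> [:0, -1:] + \<phi> * pcompose h [:0, -1:])
          + 4 * (h * pcompose h [:0, -1:])"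
    unfolding fac by (subst (1 2) P) (simp add: pcompose_add pcompose_mult algebra_simps)
  moreover have "4 dvd 2 * (h * pcompose \<phi> [:0, -1:] + \<phi> * pcompose h [:0, -1:])"
    using mult_dvd_mono[OF dvd_refl mult_pcompose_neg_add_cong_mod_2, of 2 h \<phi>] by simp
  ultimately show ?thesis
    by (metis dvd_add dvd_triv_left)
qed

text \<open>
  Since \<open>X $ 0 = 1\<close> and \<open>t $ 0 = 0\<close>, the \<open>n\<close>-th coefficient of \<open>X * t + t * t\<close> is
  \<open>t $ n\<close> plus terms in \<open>t $ 1, \<dots>, t $ (n - 1)\<close>; solving for \<open>t $ n\<close> gives the recursion.
\<close>
fun fps_quadratic_root_nth :: "'a::comm_ring_1 fps \<Rightarrow> 'a fps \<Rightarrow> nat \<Rightarrow> 'a" where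
  "fps_quadratic_root_nth X Y n =
     (if n = 0 then 0
      else Y $ n - (\<Sum>i=1..n. X $ i * fps_quadratic_root_nth X Y (n - i))
                 - (\<Sum>i=1..<n. fps_quadratic_root_nth X Y i * fps_quadratic_root_nth X Y (n - i)))"

declare fps_quadratic_root_nth.simps [simp del]

lemma fps_quadratic_root:
  fixes X Y :: "'a::comm_ring_1 fps"
  assumes "X $ 0 = 1" and "Y $ 0 = 0"
  defines "t \<equiv> Abs_fps (fps_quadratic_root_nth X Y)"
  shows "X * t + t * t = Y"
proof (rule fps_ext)
  fix n
  have t0: "t $ 0 = 0"
    by (simp add: t_def fps_quadratic_root_nth.simps)
  show "(X * t + t * t) $ n = Y $ n"
  proof (cases "n = 0")
    case True
    then show ?thesis using assms t0 by simp
  next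
    case False
    have "(\<Sum>i=0..n. X $ i * t $ (n - i)) = t $ n + (\<Sum>i=1..n. X $ i * t $ (n - i))"
      using assms by (simp add: sum.atLeast_Suc_atMost)
    moreover have "(\<Sum>i=0..n. t $ i * t $ (n - i)) = (\<Sum>i=1..<n. t $ i * t $ (n - i))"
    proof -
      have "{0..n} = insert 0 (insert n {1..<n})"
        using False by auto
      then show ?thesis
        using False t0 by simp
    qed
    ultimately show ?thesis
      using False by (simp add: fps_mult_nth t_def fps_quadratic_root_nth.simps[of X Y n])
  qed
qed

lemma fps_square_plus_four_times_is_square:
  fixes X Y :: "'a::comm_ring_1 fps"
  assumes "X $ 0 = 1" and "Y $ 0 = 0"
  shows "\<exists>A. X\<^sup>2 + 4 * Y = A\<^sup>2"
proof -
  obtain t where t: "X * t + t * t = Y"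
    using fps_quadratic_root[OF assms] by blast
  have "X\<^sup>2 + 4 * Y = (X + 2 * t)\<^sup>2"
    unfolding t[symmetric] by (simp add: algebra_simps power2_eq_square)
  then show ?thesis ..
qed

lemma map_poly_of_int_add:
  "map_poly (of_int :: int \<Rightarrow> 'a::comm_ring_1) (p + q) = map_poly of_int p + map_poly of_int q"
  by (rule poly_eqI) (simp add: coeff_map_poly)

lemma map_poly_of_int_mult:
  "map_poly (of_int :: int \<Rightarrow> 'a::comm_ring_1) (p * q) = map_poly of_int p * map_poly of_int q"
  by (rule poly_eqI) (simp add: coeff_map_poly coeff_mult)

lemma map_poly_of_int_pcompose:
  "map_poly (of_int :: int \<Rightarrow> 'a::comm_ring_1) (pcompose p q)
   = pcompose (map_poly of_int p) (map_poly of_int q)"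
  by (induction p) (simp_all add: pcompose_pCons map_poly_pCons map_poly_of_int_add map_poly_of_int_mult)

lemma fps_of_poly_map_poly_of_int_square:
  assumes "fps_of_poly p = A\<^sup>2"
  shows "fps_of_poly (map_poly (of_int :: int \<Rightarrow> 'a::comm_ring_1) p)
         = (Abs_fps (\<lambda>n. of_int (A $ n)))\<^sup>2"
proof -
  have "coeff p n = (A * A) $ n" for n
    using assms by (metis fps_of_poly_nth power2_eq_square)
  then show ?thesis
    by (intro fps_ext) (simp add: coeff_map_poly power2_eq_square fps_mult_nth)
qed

lemma conway_triple_eq_map_poly:
  assumes "C = pcompose P [:0, 0, 1:]"
  shows "conway_triple C
         = map_poly of_int (C * pcompose P [:0, 0, -1:] * pcompose C [:0, 0, 1:])"
proof -
  \<comment> \<open>\<open>(iz)\<^sup>2 = -z\<^sup>2\<close>, so \<open>C(iz) = P(-z\<^sup>2)\<close> has integer coefficients\<close>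
  have "pcompose (map_poly of_int C) [:0, \<i>:] = map_poly of_int (pcompose P [:0, 0, -1:])"
    unfolding assms map_poly_of_int_pcompose
    by (simp add: pcompose_assoc[symmetric] pcompose_pCons map_poly_pCons)
  moreover have "pcompose (map_poly of_int C) [:0, 0, 1:]
                 = map_poly (of_int :: int \<Rightarrow> complex) (pcompose C [:0, 0, 1:])"
    by (simp add: map_poly_of_int_pcompose map_poly_pCons)
  ultimately show ?thesis
    unfolding conway_triple_def by (simp add: map_poly_of_int_mult)
qed

lemma conway_cong_mod_4:
  fixes C P \<phi> :: "int poly"
  assumes "C = pcompose P [:0, 0, 1:]" and "C = \<phi> * pcompose \<phi> [:0, -1:]"
  shows "4 dvd C * pcompose P [:0, 0, -1:] - pcompose C [:0, 0, 1:]"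
proof -
  have "pcompose (P * pcompose P [:0, -1:] - pcompose P [:0, 0, 1:]) [:0, 0, 1:]
        = C * pcompose P [:0, 0, -1:] - pcompose C [:0, 0, 1:]"
    using assms(1)
    by (simp add: pcompose_diff pcompose_mult pcompose_assoc[symmetric] pcompose_pCons)
  moreover have "4 dvd P * pcompose P [:0, -1:] - pcompose P [:0, 0, 1:]"
    using assms pcompose_x_squared_cong_mod_4[of P \<phi>] by simp
  ultimately show ?thesis
    by (metis pcompose_dvd_pcompose pcompose_numeral)
qed

lemma conway_triple_eq_square_plus_four_times:
  fixes C \<phi> :: "int poly"
  assumes "coeff C 0 = 1" and "\<forall>n. odd n \<longrightarrow> coeff C n = 0"
    and "C = \<phi> * pcompose \<phi> [:0, -1:]"
  obtains D where "coeff D 0 = 0"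
    and "conway_triple C
         = map_poly of_int ((pcompose C [:0, 0, 1:])\<^sup>2 + 4 * (pcompose C [:0, 0, 1:] * D))"
proof -
  obtain P where CP: "C = pcompose P [:0, 0, 1:]"
    using even_poly_obtain_pcompose_x_squared[OF assms(2)] .
  obtain D where "C * pcompose P [:0, 0, -1:] - pcompose C [:0, 0, 1:] = 4 * D"
    using conway_cong_mod_4[OF CP assms(3)] ..
  then have D: "C * pcompose P [:0, 0, -1:] = pcompose C [:0, 0, 1:] + 4 * D"
    by (simp add: diff_eq_eq)
  show ?thesis
  proof
    show "coeff D 0 = 0"
      using assms(1) arg_cong[OF D, of "\<lambda>p. coeff p 0"]
      by (simp add: CP pcompose_coeff_0 coeff_mult_0 poly_0_coeff_0 numeral_mult_conv_smult)
    show "conway_triple C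
          = map_poly of_int ((pcompose C [:0, 0, 1:])\<^sup>2 + 4 * (pcompose C [:0, 0, 1:] * D))"
      unfolding conway_triple_eq_map_poly[OF CP] D by (simp add: algebra_simps power2_eq_square)
  qed
qed

theorem proposition5p1:
  fixes C \<phi> :: "int poly"
  assumes C0: "coeff C 0 = 1"
    and Ceven: "\<forall>n. odd n \<longrightarrow> coeff C n = 0"
    and Cfac: "C = \<phi> * pcompose \<phi> [:0, -1:]"
  shows "(\<exists>a :: nat \<Rightarrow> int.
            fps_of_poly (conway_triple C) = (Abs_fps (\<lambda>n. of_int (a n)))^2)
       \<and> (\<exists>F :: int poly. (\<forall>n. odd n \<longrightarrow> coeff F n = 0) \<and>
            (\<forall>n. \<exists>k :: int. coeff (map_poly of_int (F^2)) n - coeff (conway_triple C) n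
                              = of_int (4 * k)))"
proof -
  define C2 where "C2 = pcompose C [:0, 0, 1:]"
  obtain D where D0: "coeff D 0 = 0"
    and triple: "conway_triple C = map_poly of_int (C2\<^sup>2 + 4 * (C2 * D))"
    using conway_triple_eq_square_plus_four_times[OF C0 Ceven Cfac] unfolding C2_def .
  obtain A where "(fps_of_poly C2)\<^sup>2 + 4 * fps_of_poly (C2 * D) = A\<^sup>2"
    using fps_square_plus_four_times_is_square[of "fps_of_poly C2" "fps_of_poly (C2 * D)"] C0 D0
    by (auto simp: C2_def pcompose_coeff_0 poly_0_coeff_0 coeff_mult_0)
  then have "fps_of_poly (conway_triple C) = (Abs_fps (\<lambda>n. of_int (A $ n)))\<^sup>2"
    unfolding triple by (intro fps_of_poly_map_poly_of_int_square) (simp add: fps_of_poly_simps)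
  moreover have "coeff (map_poly of_int (C2\<^sup>2)) n - coeff (conway_triple C) n
                 = of_int (4 * - coeff (C2 * D) n)" for n
    by (simp add: triple coeff_map_poly numeral_mult_conv_smult)
  moreover have "\<forall>n. odd n \<longrightarrow> coeff C2 n = 0"
    by (simp add: C2_def coeff_pcompose_x_squared)
  ultimately show ?thesis
    by blast
qed

end
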